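(* As formal power series in $z,q$, $$\sum_{n\geq 1}\sum_{j\geq 0}FD_{j,2}(n)z^jq^n=\frac{q(1-(1-z)q)}{1-2q+(1-z)q^3}=\sum_{n\geq 1}\sum_{j\geq 0}FO_{j,2}(n)z^jq^n .$$
   Context: A partition is a finite nonincreasing sequence of positive integers (its parts); its size is not fixed. The perimeter of a partition with largest part $\alpha$ and $\lambda$ parts is $\alpha+\lambda-1$. $FO_{j,2}(n)$ is the number of partitions of perimeter $n$ having exactly $j$ distinct even part sizes; $FD_{j,2}(n)$ is the number of partitions of perimeter $n$ having exactly $j$ distinct part sizes that each appear at least $2$ times. *)

theory Defs
  imports "HOL-Computational_Algebra.Computational_Algebra"
begin

definition is_partition :: "nat list \<Rightarrow> bool" where
  "is_partition p \<longleftrightarrow> sorted (rev p) \<and> (\<forall>x\<in>set p. 0 < x)"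

(* perimeter = largest part + number of parts - 1; only defined for nonempty partitions *)
definition perim_partitions :: "nat \<Rightarrow> nat list set" where
  "perim_partitions n = {p. is_partition p \<and> p \<noteq> [] \<and> hd p + length p - 1 = n}"

definition FO2 :: "nat \<Rightarrow> nat \<Rightarrow> nat" where
  "FO2 j n = card {p \<in> perim_partitions n. card {x \<in> set p. even x} = j}"

definition FD2 :: "nat \<Rightarrow> nat \<Rightarrow> nat" where
  "FD2 j n = card {p \<in> perim_partitions n. card {x \<in> set p. 2 \<le> count_list p x} = j}"

(* bivariate generating series: fps in q with polynomial coefficients in z *)
definition bigf :: "(nat \<Rightarrow> nat \<Rightarrow> nat) \<Rightarrow> int poly fps" where
  "bigf F = Abs_fps (\<lambda>n. if 1 \<le> n then (\<Sum>j\<in>{j. F j n \<noteq> 0}. of_nat (F j n) * [:0, 1:] ^ j) else 0)"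

definition zpoly :: "int poly fps" where
  "zpoly = fps_const [:0, 1:]"

end

theory Submission
  imports Defs
begin

text \<open>Every partition of perimeter n + 1 \<ge> 2 arises in exactly one way from a partition of
  perimeter n, either by repeating its largest part or by increasing its largest part by one.
  How the two statistics change under these moves depends only on the largest part and its
  multiplicity. Refining the generating series W by two auxiliary series S and T that record
  this information, the moves give X-linear relations W = X(1 + 2W - cS + cT),
  S = X(1 + W + cT), T = XS with c = 1 - z, and eliminating S and T yields the rational
  function. Both statistics lead to the same system.\<close>

lemma is_partition_Cons:
  "is_partition (x # r) \<longleftrightarrow> (\<forall>y\<in>set r. y \<le> x) \<and> 0 < x \<and> is_partition r"
  unfolding is_partition_def sorted_wrt_rev by auto

lemma is_partition_Nil [simp]: "is_partition []"
  by (simp add: is_partition_def)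

lemma perim_partitions_0: "perim_partitions 0 = {}"
  unfolding perim_partitions_def by (auto simp: neq_Nil_conv is_partition_Cons)

lemma perim_partitions_1: "perim_partitions (Suc 0) = {[Suc 0]}"
  unfolding perim_partitions_def by (auto simp: neq_Nil_conv is_partition_Cons add_is_1)

lemma perim_partitions_finite: "finite (perim_partitions n)"
proof (rule finite_subset)
  show "perim_partitions n \<subseteq> {xs. set xs \<subseteq> {0..n} \<and> length xs \<le> n}"
    unfolding perim_partitions_def by (force simp: neq_Nil_conv is_partition_Cons)
qed (rule finite_lists_length_le, simp)

lemma perim_partitions_Cons:
  assumes "p \<in> perim_partitions n"
  obtains x r where "p = x # r" "\<forall>y\<in>set r. y \<le> x"
  using assms unfolding perim_partitions_def by (cases p) (auto simp: is_partition_Cons)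

definition repeat_largest :: "nat list \<Rightarrow> nat list" where
  "repeat_largest p = hd p # p"

definition grow_largest :: "nat list \<Rightarrow> nat list" where
  "grow_largest p = Suc (hd p) # tl p"

lemma is_partition_Cons_less:
  assumes "is_partition (x # r)" "\<not> (r \<noteq> [] \<and> hd r = x)"
  shows "\<forall>y\<in>set r. y < x"
proof (cases r)
  case (Cons u s)
  with assms have "u < x" "\<forall>y\<in>set s. y \<le> u"
    by (auto simp: is_partition_Cons)
  with Cons show ?thesis by auto
qed simp

lemma perim_partitions_Suc:
  assumes "1 \<le> n"
  shows "perim_partitions (Suc n)
    = repeat_largest ` perim_partitions n \<union> grow_largest ` perim_partitions n"
proof (intro equalityI subsetI)
  fix q assume "q \<in> perim_partitions (Suc n)"
  then obtain x r where q: "q = x # r" "is_partition (x # r)" "x + length r = Suc n"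
    unfolding perim_partitions_def by (cases q) auto
  show "q \<in> repeat_largest ` perim_partitions n \<union> grow_largest ` perim_partitions n"
  proof (cases "r \<noteq> [] \<and> hd r = x")
    case True
    with q have "r \<in> perim_partitions n" "q = repeat_largest r"
      unfolding perim_partitions_def repeat_largest_def
      by (auto simp: is_partition_Cons neq_Nil_conv)
    then show ?thesis by blast
  next
    case False
    have less: "\<forall>y\<in>set r. y < x"
      using is_partition_Cons_less[OF q(2) False] .
    from q have "is_partition r"
      by (simp add: is_partition_Cons)
    have "2 \<le> x"
    proof (cases r)
      case (Cons y s)
      with q less show ?thesis by (auto simp: is_partition_Cons)
    qed (use q assms in simp)
    with q less have "(x - 1) # r \<in> perim_partitions n" "q = grow_largest ((x - 1) # r)"
      unfolding perim_partitions_def grow_largest_def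
      by (auto simp: is_partition_Cons \<open>is_partition r\<close>)
    then show ?thesis by blast
  qed
next
  fix q assume "q \<in> repeat_largest ` perim_partitions n \<union> grow_largest ` perim_partitions n"
  then obtain x r where "x # r \<in> perim_partitions n"
    "q = repeat_largest (x # r) \<or> q = grow_largest (x # r)"
    unfolding perim_partitions_def by (auto simp: neq_Nil_conv)
  then show "q \<in> perim_partitions (Suc n)"
    unfolding perim_partitions_def repeat_largest_def grow_largest_def
    by (auto simp: is_partition_Cons le_SucI)
qed

lemma sum_perim_partitions_Suc:
  assumes "1 \<le> n"
  shows "(\<Sum>q\<in>perim_partitions (Suc n). g q)
    = (\<Sum>p\<in>perim_partitions n. g (repeat_largest p) + g (grow_largest p))"
proof -
  let ?P = "perim_partitions n"
  have nonempty: "p \<noteq> []" if "p \<in> ?P" for p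
    using that unfolding perim_partitions_def by auto
  have inj_repeat: "inj_on repeat_largest ?P"
    unfolding inj_on_def repeat_largest_def by auto
  have inj_grow: "inj_on grow_largest ?P"
    unfolding inj_on_def grow_largest_def by (metis nonempty list.collapse list.inject nat.inject)
  have "repeat_largest p \<noteq> grow_largest p'" if "p \<in> ?P" "p' \<in> ?P" for p p'
  proof
    assume eq: "repeat_largest p = grow_largest p'"
    from that(2) obtain x r where p': "p' = x # r" "is_partition (x # r)"
      unfolding perim_partitions_def by (cases p') auto
    with eq nonempty[OF that(1)] have "r \<noteq> []" "hd r = Suc x"
      unfolding repeat_largest_def grow_largest_def by auto
    with p' show False by (auto simp: is_partition_Cons neq_Nil_conv)
  qed
  then have disjoint: "repeat_largest ` ?P \<inter> grow_largest ` ?P = {}"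
    by blast
  have "(\<Sum>q\<in>perim_partitions (Suc n). g q) = sum g (repeat_largest ` ?P) + sum g (grow_largest ` ?P)"
    unfolding perim_partitions_Suc[OF assms]
    using perim_partitions_finite disjoint by (intro sum.union_disjoint) auto
  also have "\<dots> = (\<Sum>p\<in>?P. g (repeat_largest p)) + (\<Sum>p\<in>?P. g (grow_largest p))"
    by (simp add: sum.reindex[OF inj_repeat] sum.reindex[OF inj_grow])
  finally show ?thesis
    by (simp add: sum.distrib)
qed

definition perim_gf :: "(nat list \<Rightarrow> 'a::comm_ring_1) \<Rightarrow> 'a fps" where
  "perim_gf g = Abs_fps (\<lambda>n. \<Sum>p\<in>perim_partitions n. g p)"

lemma perim_gf_add: "perim_gf (\<lambda>p. f p + g p) = perim_gf f + perim_gf g"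
  by (rule fps_ext) (simp add: perim_gf_def sum.distrib)

lemma perim_gf_diff: "perim_gf (\<lambda>p. f p - g p) = perim_gf f - perim_gf g"
  by (rule fps_ext) (simp add: perim_gf_def sum_subtractf)

lemma perim_gf_mult_const: "perim_gf (\<lambda>p. c * g p) = fps_const c * perim_gf g"
  by (rule fps_ext) (simp add: perim_gf_def sum_distrib_left)

lemma perim_gf_eq_X_mult:
  assumes "\<And>x r. \<forall>y\<in>set r. y \<le> x \<Longrightarrow> g (x # x # r) + g (Suc x # r) = h (x # r)"
  shows "perim_gf g = fps_X * (fps_const (g [1]) + perim_gf h)"
proof (rule fps_ext)
  fix n
  consider "n = 0" | "n = 1" | m where "n = Suc m" "1 \<le> m"
    by (cases n; cases "n = 1") auto
  then show "perim_gf g $ n = (fps_X * (fps_const (g [1]) + perim_gf h)) $ n"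
  proof cases
    case 3
    then have "(\<Sum>q\<in>perim_partitions n. g q)
        = (\<Sum>p\<in>perim_partitions m. g (repeat_largest p) + g (grow_largest p))"
      by (simp add: sum_perim_partitions_Suc)
    also have "\<dots> = (\<Sum>p\<in>perim_partitions m. h p)"
    proof (rule sum.cong)
      fix p assume "p \<in> perim_partitions m"
      then obtain x r where "p = x # r" "\<forall>y\<in>set r. y \<le> x"
        by (rule perim_partitions_Cons)
      then show "g (repeat_largest p) + g (grow_largest p) = h p"
        unfolding repeat_largest_def grow_largest_def using assms by simp
    qed simp
    finally show ?thesis
      using 3 by (simp add: perim_gf_def fps_X_mult_nth)
  qed (simp_all add: perim_gf_def fps_X_mult_nth perim_partitions_0 perim_partitions_1)
qed

lemma perim_gf_rational:
  fixes z :: "'a::comm_ring_1" and w s t :: "nat list \<Rightarrow> 'a"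
  assumes w_step: "\<And>x r. \<forall>y\<in>set r. y \<le> x \<Longrightarrow>
      w (x # x # r) + w (Suc x # r) = 2 * w (x # r) - (1 - z) * s (x # r) + (1 - z) * t (x # r)"
    and s_step: "\<And>x r. \<forall>y\<in>set r. y \<le> x \<Longrightarrow>
      s (x # x # r) + s (Suc x # r) = w (x # r) + (1 - z) * t (x # r)"
    and t_step: "\<And>x r. \<forall>y\<in>set r. y \<le> x \<Longrightarrow> t (x # x # r) + t (Suc x # r) = s (x # r)"
    and "w [1] = 1" "s [1] = 1" "t [1] = 0"
  shows "perim_gf w * (1 - 2 * fps_X + fps_const (1 - z) * fps_X ^ 3)
    = fps_X * (1 - fps_const (1 - z) * fps_X)"
proof -
  let ?W = "perim_gf w" and ?S = "perim_gf s" and ?T = "perim_gf t"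
  let ?X = "fps_X :: 'a fps"
  \<comment> \<open>c is kept opaque: simp would otherwise rewrite - fps_const (1 - z) to fps_const (z - 1)\<close>
  define c where "c = fps_const (1 - z)"
  have W: "?W = ?X * (1 + (2 * ?W - c * ?S + c * ?T))"
    using perim_gf_eq_X_mult[OF w_step] assms
    by (simp add: c_def perim_gf_add perim_gf_diff perim_gf_mult_const numeral_fps_const)
  have S: "?S = ?X * (1 + (?W + c * ?T))"
    using perim_gf_eq_X_mult[OF s_step] assms by (simp add: c_def perim_gf_add perim_gf_mult_const)
  have T: "?T = ?X * ?S"
    using perim_gf_eq_X_mult[OF t_step] assms by simp
  have S': "?S * (1 - c * ?X ^ 2) = ?X * (1 + ?W)"
    using S T by (simp add: algebra_simps power2_eq_square)
  have W': "?W * (1 - 2 * ?X) - ?X = - c * ?X * (1 - ?X) * ?S"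
    using W T by (simp add: algebra_simps)
  have "(?W * (1 - 2 * ?X) - ?X) * (1 - c * ?X ^ 2) = - c * ?X * (1 - ?X) * ?X * (1 + ?W)"
    by (simp only: W' S' mult.assoc)
  then show ?thesis
    unfolding c_def[symmetric] by (simp add: algebra_simps power2_eq_square power3_eq_cube)
qed

definition repeated_parts :: "nat list \<Rightarrow> nat set" where
  "repeated_parts p = {x \<in> set p. 2 \<le> count_list p x}"

lemma repeated_parts_Cons:
  "repeated_parts (x # r) = repeated_parts r \<union> (if x \<in> set r then {x} else {})"
  unfolding repeated_parts_def using count_list_0_iff[of r x] by (auto split: if_splits)

lemma card_repeated_parts_moves:
  assumes "\<forall>y\<in>set r. y \<le> x"
  obtains K where
    "card (repeated_parts (x # r)) = K + (if count_list r x = 0 then 0 else 1)"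
    "card (repeated_parts (x # x # r)) = K + 1"
    "card (repeated_parts (Suc x # r)) = K + (if count_list r x \<le> 1 then 0 else 1)"
proof
  let ?A = "repeated_parts r - {x}"
  have fin: "finite ?A"
    unfolding repeated_parts_def by simp
  have "x \<in> repeated_parts r \<longleftrightarrow> 2 \<le> count_list r x"
    unfolding repeated_parts_def using count_list_0_iff[of r x] by auto
  moreover have "Suc x \<notin> set r"
    using assms by auto
  ultimately have
    "repeated_parts (x # r) = (if count_list r x = 0 then ?A else insert x ?A)"
    "repeated_parts (x # x # r) = insert x ?A"
    "repeated_parts (Suc x # r) = (if count_list r x \<le> 1 then ?A else insert x ?A)"
    unfolding repeated_parts_Cons using count_list_0_iff[of r x] by auto
  with fin show
    "card (repeated_parts (x # r)) = card ?A + (if count_list r x = 0 then 0 else 1)"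
    "card (repeated_parts (x # x # r)) = card ?A + 1"
    "card (repeated_parts (Suc x # r)) = card ?A + (if count_list r x \<le> 1 then 0 else 1)"
    by (simp_all add: card.insert_remove)
qed

text \<open>Here t weights a partition whose largest part occurs exactly twice as if that part
  were not repeated.\<close>

lemma repeated_parts_steps:
  fixes z :: "'a::comm_ring_1"
  defines "w \<equiv> \<lambda>p. z ^ card (repeated_parts p)"
    and "s \<equiv> \<lambda>p. if count_list (tl p) (hd p) = 0 then z ^ card (repeated_parts p) else 0"
    and "t \<equiv> \<lambda>p. if count_list (tl p) (hd p) = 1 then z ^ (card (repeated_parts p) - 1) else 0"
  assumes r_le: "\<forall>y\<in>set r. y \<le> x"
  shows "w (x # x # r) + w (Suc x # r) = 2 * w (x # r) - (1 - z) * s (x # r) + (1 - z) * t (x # r)"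
    and "s (x # x # r) + s (Suc x # r) = w (x # r) + (1 - z) * t (x # r)"
    and "t (x # x # r) + t (Suc x # r) = s (x # r)"
proof -
  obtain K where K:
    "card (repeated_parts (x # r)) = K + (if count_list r x = 0 then 0 else 1)"
    "card (repeated_parts (x # x # r)) = K + 1"
    "card (repeated_parts (Suc x # r)) = K + (if count_list r x \<le> 1 then 0 else 1)"
    using card_repeated_parts_moves[OF r_le] .
  have "count_list r (Suc x) = 0"
    using r_le by (auto simp: count_list_0_iff)
  then show "w (x # x # r) + w (Suc x # r) = 2 * w (x # r) - (1 - z) * s (x # r) + (1 - z) * t (x # r)"
    and "s (x # x # r) + s (Suc x # r) = w (x # r) + (1 - z) * t (x # r)"
    and "t (x # x # r) + t (Suc x # r) = s (x # r)"
    unfolding w_def s_def t_def K list.sel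
    by (cases "count_list r x = 0"; cases "count_list r x = 1"; simp add: algebra_simps)+
qed

definition even_parts :: "nat list \<Rightarrow> nat set" where
  "even_parts p = {x \<in> set p. even x}"

lemma card_even_parts_moves:
  assumes "\<forall>y\<in>set r. y \<le> x"
  obtains K where
    "card (even_parts (x # r)) = K + (if even x then 1 else 0)"
    "card (even_parts (x # x # r)) = card (even_parts (x # r))"
    "card (even_parts (Suc x # r)) = K + (if even x \<and> x \<in> set r then 1 else 0) + (if odd x then 1 else 0)"
proof
  let ?A = "even_parts r - {x}"
  have "Suc x \<notin> set r"
    using assms by auto
  then have x_r: "even_parts (x # r) = (if even x then insert x ?A else ?A)"
    and Suc_x_r: "even_parts (Suc x # r) = (if odd x then insert (Suc x) else id)
       (if even x \<and> x \<in> set r then insert x ?A else ?A)"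
    and "Suc x \<notin> even_parts r" "finite (even_parts r)"
    unfolding even_parts_def by auto
  then show
    "card (even_parts (x # r)) = card ?A + (if even x then 1 else 0)"
    "card (even_parts (x # x # r)) = card (even_parts (x # r))"
    "card (even_parts (Suc x # r))
       = card ?A + (if even x \<and> x \<in> set r then 1 else 0) + (if odd x then 1 else 0)"
    by (simp_all add: card.insert_remove even_parts_def[of "x # x # r"] even_parts_def[of "x # r"])
qed

text \<open>Here t weights a partition whose largest part is even and occurs once as if that part
  were odd.\<close>

lemma even_parts_steps:
  fixes z :: "'a::comm_ring_1"
  defines "w \<equiv> \<lambda>p. z ^ card (even_parts p)"
    and "s \<equiv> \<lambda>p. if odd (hd p) then z ^ card (even_parts p) else 0"
    and "t \<equiv> \<lambda>p. if even (hd p) \<and> hd p \<notin> set (tl p) then z ^ (card (even_parts p) - 1) else 0"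
  assumes r_le: "\<forall>y\<in>set r. y \<le> x"
  shows "w (x # x # r) + w (Suc x # r) = 2 * w (x # r) - (1 - z) * s (x # r) + (1 - z) * t (x # r)"
    and "s (x # x # r) + s (Suc x # r) = w (x # r) + (1 - z) * t (x # r)"
    and "t (x # x # r) + t (Suc x # r) = s (x # r)"
proof -
  obtain K where K:
    "card (even_parts (x # r)) = K + (if even x then 1 else 0)"
    "card (even_parts (x # x # r)) = card (even_parts (x # r))"
    "card (even_parts (Suc x # r)) = K + (if even x \<and> x \<in> set r then 1 else 0) + (if odd x then 1 else 0)"
    using card_even_parts_moves[OF r_le] .
  moreover have "Suc x \<notin> set r"
    using r_le by auto
  ultimately show "w (x # x # r) + w (Suc x # r) = 2 * w (x # r) - (1 - z) * s (x # r) + (1 - z) * t (x # r)"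
    and "s (x # x # r) + s (Suc x # r) = w (x # r) + (1 - z) * t (x # r)"
    and "t (x # x # r) + t (Suc x # r) = s (x # r)"
    unfolding w_def s_def t_def list.sel
    by (cases "even x"; cases "x \<in> set r"; simp add: algebra_simps)+
qed

lemma perim_gf_repeated_parts:
  fixes z :: "'a::comm_ring_1"
  shows "perim_gf (\<lambda>p. z ^ card (repeated_parts p)) * (1 - 2 * fps_X + fps_const (1 - z) * fps_X ^ 3)
    = fps_X * (1 - fps_const (1 - z) * fps_X)"
  by (rule perim_gf_rational[where
        s = "\<lambda>p. if count_list (tl p) (hd p) = 0 then z ^ card (repeated_parts p) else 0" and
        t = "\<lambda>p. if count_list (tl p) (hd p) = 1 then z ^ (card (repeated_parts p) - 1) else 0"])
    ((rule repeated_parts_steps, assumption)+, simp_all add: repeated_parts_def)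

lemma perim_gf_even_parts:
  fixes z :: "'a::comm_ring_1"
  shows "perim_gf (\<lambda>p. z ^ card (even_parts p)) * (1 - 2 * fps_X + fps_const (1 - z) * fps_X ^ 3)
    = fps_X * (1 - fps_const (1 - z) * fps_X)"
  by (rule perim_gf_rational[where
        s = "\<lambda>p. if odd (hd p) then z ^ card (even_parts p) else 0" and
        t = "\<lambda>p. if even (hd p) \<and> hd p \<notin> set (tl p) then z ^ (card (even_parts p) - 1) else 0"])
    ((rule even_parts_steps, assumption)+, simp_all add: even_parts_def Collect_conv_if)

lemma bigf_eq_perim_gf:
  assumes F: "\<And>j n. F j n = card {p \<in> perim_partitions n. f p = j}"
  shows "bigf F = perim_gf (\<lambda>p. [:0, 1:] ^ f p)"
proof (rule fps_ext)
  fix n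
  let ?P = "perim_partitions n"
  have "{j. F j n \<noteq> 0} = f ` ?P"
    using F perim_partitions_finite by auto
  then have "(\<Sum>j\<in>{j. F j n \<noteq> 0}. of_nat (F j n) * [:0, 1:] ^ j)
      = (\<Sum>j\<in>f ` ?P. \<Sum>p\<in>{p \<in> ?P. f p = j}. [:0, 1:] ^ f p)"
    by (simp add: F)
  also have "\<dots> = (\<Sum>p\<in>?P. [:0, 1:] ^ f p)"
    by (rule sum.image_gen[symmetric, OF perim_partitions_finite])
  finally show "bigf F $ n = perim_gf (\<lambda>p. [:0, 1:] ^ f p) $ n"
    by (cases "n = 0") (simp_all add: bigf_def perim_gf_def perim_partitions_0)
qed

theorem mainTheorem4:
  shows "bigf FD2 * (1 - 2 * fps_X + (1 - zpoly) * fps_X ^ 3) = fps_X * (1 - (1 - zpoly) * fps_X)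
       \<and> bigf FO2 * (1 - 2 * fps_X + (1 - zpoly) * fps_X ^ 3) = fps_X * (1 - (1 - zpoly) * fps_X)"
proof -
  have "1 - zpoly = fps_const (1 - [:0, 1:])"
    by (simp add: zpoly_def)
  moreover have "bigf FD2 = perim_gf (\<lambda>p. [:0, 1:] ^ card (repeated_parts p))"
    by (rule bigf_eq_perim_gf) (simp add: FD2_def repeated_parts_def)
  moreover have "bigf FO2 = perim_gf (\<lambda>p. [:0, 1:] ^ card (even_parts p))"
    by (rule bigf_eq_perim_gf) (simp add: FO2_def even_parts_def)
  ultimately show ?thesis
    using perim_gf_repeated_parts perim_gf_even_parts by metis
qed

end
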